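(* The doctrine $\mathbb P\Gamma:\mathbf{PAsm}^{op}\to\mathbf{InfSL}$ satisfies the Type-theoretic Church's Thesis $(\mathbf{TCT})$.
   Context: Write $\varphi_e$ for the $e$-th partial recursive function and $\langle n,m\rangle$ for a recursive pairing. $\mathbf{PAsm}$ is the category of partitioned assemblies: objects are pairs $(P,T)$ with $P$ a set and $T:P\to\mathbb N$ a function; arrows $f:(P,T)\to(P',T')$ are functions $f:P\to P'$ such that some $t\in\mathbb N$ tracks $f$, i.e. for all $x\in P$, $\varphi_t(T(x))$ is defined and equals $T'(f(x))$. Products are $(P\times M,\,(x,y)\mapsto\langle T(x),S(y)\rangle)$; $\mathbf N=(\mathbb N,\mathrm{id})$ with zero and successor is a parameterized natural number object; a weak exponential of $\mathbf N$ with $\mathbf N$ is $(W,V)$, $W=\{(g,t)\in\mathbb N^{\mathbb N}\times\mathbb N\mid t\text{ tracks }g\}$, $V(g,t)=t$, with weak evaluation $ev((g,t),x)=g(x)$. $\mathbb P\Gamma$ sends $(P,T)$ to the powerset of $P$ and acts on arrows by inverse image; it is a (boolean) hyperdoctrine whose equality predicates are diagonals and whose quantifiers are the set-theoretic ones. Let $T:\mathbf N\times\mathbf N\times\mathbf N\to\mathbf N$ and $U:\mathbf N\to\mathbf N$ denote arrows representing Kleene's primitive recursive T-predicate (as a 0/1-valued function) and result-extraction function. For a weak evaluation $ev:W\times\mathbf N\to\mathbf N$ let $\overline{ev}(e,x,y,f)$ be the formula $T(e,x,y)=_{\mathbf N}s(0)\wedge U(y)=_{\mathbf N}ev(f,x)$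 and $\mathbf{Rec}(f)$ be $\exists e:\mathbf N.\forall x:\mathbf N.\exists y:\mathbf N.\overline{ev}(e,x,y,f)$. A doctrine with a parameterized natural number object satisfies $(\mathbf{TCT})$ if for some weak exponential $W$ of $\mathbf N$ with $\mathbf N$ and weak evaluation $ev$ one has $\vdash\forall f:W.\mathbf{Rec}(f)$ (i.e. the top element of the fibre over the terminal object lies below this sentence). *)

theory Defs
  imports Main
begin

text \<open>
Partial recursive functions are given by an enumeration phi :: nat => nat => nat option
(phi e x = Some z means that the e-th partial recursive function is defined at x with value z).
A partitioned assembly (P,T) is modelled by a carrier set P :: 'a set and a realizer map
T :: 'a => nat.
\<close>

type_synonym 'a pasm = "'a set \<times> ('a \<Rightarrow> nat)"

definition tracks ::
  "(nat \<Rightarrow> nat \<Rightarrow> nat option) \<Rightarrow> nat \<Rightarrow> 'a pasm \<Rightarrow> 'b pasm \<Rightarrow> ('a \<Rightarrow> 'b) \<Rightarrow> bool" where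
  "tracks phi t A B f \<longleftrightarrow> (\<forall>x\<in>fst A. phi t (snd A x) = Some (snd B (f x)))"

definition pasm_arrow ::
  "(nat \<Rightarrow> nat \<Rightarrow> nat option) \<Rightarrow> 'a pasm \<Rightarrow> 'b pasm \<Rightarrow> ('a \<Rightarrow> 'b) \<Rightarrow> bool" where
  "pasm_arrow phi A B f \<longleftrightarrow> f ` fst A \<subseteq> fst B \<and> (\<exists>t. tracks phi t A B f)"

definition pasm_prod :: "(nat \<Rightarrow> nat \<Rightarrow> nat) \<Rightarrow> 'a pasm \<Rightarrow> 'b pasm \<Rightarrow> ('a \<times> 'b) pasm" where
  "pasm_prod pair A B = (fst A \<times> fst B, \<lambda>(x, y). pair (snd A x) (snd B y))"

definition pasm_N :: "nat pasm" where
  "pasm_N = (UNIV, id)"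

definition weak_exp_W :: "(nat \<Rightarrow> nat \<Rightarrow> nat option) \<Rightarrow> ((nat \<Rightarrow> nat) \<times> nat) set" where
  "weak_exp_W phi = {(g, t). tracks phi t pasm_N pasm_N g}"

definition weak_exp :: "(nat \<Rightarrow> nat \<Rightarrow> nat option) \<Rightarrow> ((nat \<Rightarrow> nat) \<times> nat) pasm" where
  "weak_exp phi = (weak_exp_W phi, snd)"

definition weak_ev :: "((nat \<Rightarrow> nat) \<times> nat) \<Rightarrow> nat \<Rightarrow> nat" where
  "weak_ev f x = fst f x"

definition kleene_normal_form ::
  "(nat \<Rightarrow> nat \<Rightarrow> nat option) \<Rightarrow> (nat \<Rightarrow> nat \<Rightarrow> nat \<Rightarrow> nat) \<Rightarrow> (nat \<Rightarrow> nat) \<Rightarrow> bool" where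
  "kleene_normal_form phi Tk Uk \<longleftrightarrow>
     (\<forall>e x y. Tk e x y \<in> {0, 1}) \<and>
     (\<forall>e x. phi e x = (if \<exists>y. Tk e x y = 1 then Some (Uk (LEAST y. Tk e x y = 1)) else None))"

text \<open>Interpretation in the doctrine of subsets: equality predicates are diagonals and the
quantifiers are the set-theoretic ones, so the formulas are interpreted as follows.\<close>

definition ev_bar ::
  "(nat \<Rightarrow> nat \<Rightarrow> nat \<Rightarrow> nat) \<Rightarrow> (nat \<Rightarrow> nat) \<Rightarrow> ('w \<Rightarrow> nat \<Rightarrow> nat)
     \<Rightarrow> nat \<Rightarrow> nat \<Rightarrow> nat \<Rightarrow> 'w \<Rightarrow> bool" where
  "ev_bar Tk Uk ev e x y f \<longleftrightarrow> Tk e x y = Suc 0 \<and> Uk y = ev f x"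

definition Rec ::
  "(nat \<Rightarrow> nat \<Rightarrow> nat \<Rightarrow> nat) \<Rightarrow> (nat \<Rightarrow> nat) \<Rightarrow> ('w \<Rightarrow> nat \<Rightarrow> nat) \<Rightarrow> 'w \<Rightarrow> bool" where
  "Rec Tk Uk ev f \<longleftrightarrow> (\<exists>e::nat. \<forall>x::nat. \<exists>y::nat. ev_bar Tk Uk ev e x y f)"

text \<open>The fibre over the terminal object is the powerset of a singleton; top below the
interpretation of the sentence means the interpretation is the whole singleton.\<close>

definition TCT_holds_for ::
  "(nat \<Rightarrow> nat \<Rightarrow> nat \<Rightarrow> nat) \<Rightarrow> (nat \<Rightarrow> nat) \<Rightarrow> 'w set \<Rightarrow> ('w \<Rightarrow> nat \<Rightarrow> nat) \<Rightarrow> bool" where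
  "TCT_holds_for Tk Uk W ev \<longleftrightarrow>
     (UNIV :: unit set) \<subseteq> {_. \<forall>f\<in>W. Rec Tk Uk ev f}"

end

theory Submission
  imports Defs
begin

text \<open>A point (g, t) of the weak exponential carries an index t of a total recursive function
computing g. By the Kleene normal form, for every x the least y with T(t, x, y) = 1 exists and
U(y) = g(x), so t itself witnesses Rec(g, t).\<close>

lemma kleene_normal_form_SomeD:
  assumes "kleene_normal_form phi Tk Uk" and "phi e x = Some z"
  shows "\<exists>y. Tk e x y = 1 \<and> Uk y = z"
proof -
  have phi_eq: "phi e x = (if \<exists>y. Tk e x y = 1 then Some (Uk (LEAST y. Tk e x y = 1)) else None)"
    using assms(1) unfolding kleene_normal_form_def by blast
  then have halts: "\<exists>y. Tk e x y = 1"
    using assms(2) by (metis option.distinct(1))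
  then have "Uk (LEAST y. Tk e x y = 1) = z"
    using assms(2) phi_eq by simp
  moreover have "Tk e x (LEAST y. Tk e x y = 1) = 1"
    using halts by (rule LeastI_ex)
  ultimately show ?thesis by blast
qed

lemma Rec_if_tracks:
  assumes "kleene_normal_form phi Tk Uk" and "tracks phi t pasm_N pasm_N g"
  shows "Rec Tk Uk weak_ev (g, t)"
proof -
  have "\<exists>y. ev_bar Tk Uk weak_ev t x y (g, t)" for x
  proof -
    have "phi t x = Some (g x)"
      using assms(2) unfolding tracks_def pasm_N_def by simp
    then show ?thesis
      using kleene_normal_form_SomeD[OF assms(1)] unfolding ev_bar_def weak_ev_def by simp
  qed
  then show ?thesis unfolding Rec_def by blast
qed

theorem proposition4p5:
  fixes phi :: "nat \<Rightarrow> nat \<Rightarrow> nat option"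
    and pair :: "nat \<Rightarrow> nat \<Rightarrow> nat"
    and Tk :: "nat \<Rightarrow> nat \<Rightarrow> nat \<Rightarrow> nat"
    and Uk :: "nat \<Rightarrow> nat"
  assumes "kleene_normal_form phi Tk Uk"
    and "pasm_arrow phi (pasm_prod pair pasm_N (pasm_prod pair pasm_N pasm_N)) pasm_N
           (\<lambda>(e, x, y). Tk e x y)"
    and "pasm_arrow phi pasm_N pasm_N Uk"
    and "pasm_arrow phi (pasm_prod pair (weak_exp phi) pasm_N) pasm_N (\<lambda>(f, x). weak_ev f x)"
  shows "TCT_holds_for Tk Uk (weak_exp_W phi) weak_ev"
proof -
  have "Rec Tk Uk weak_ev f" if "f \<in> weak_exp_W phi" for f
    using that Rec_if_tracks[OF assms(1)] unfolding weak_exp_W_def by auto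
  then show ?thesis unfolding TCT_holds_for_def by blast
qed

end
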